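(* Let $f : M^* \to \mathbb{R}^3$ be a trivalent polyhedral surface with nonvanishing edge lengths, with the three face normals at every vertex linearly independent and adjacent faces satisfying $n_l \neq \pm n_r$. For $t \in (-\epsilon,\epsilon)$ let $f_t$ be the polyhedral surface obtained by offsetting every face in parallel by the same distance $t$ in the direction of its normal, i.e. with the same face normals $n$ and heights $h_\phi + t$. Then for every face $\phi \in F^*$, \[ H_\phi = \frac12 \frac{d}{dt}\mathrm{Area}(f_t(\phi))\Big|_{t=0}. \]
   Context: Let $M=(V,E,F)$ be a cellular decomposition of an oriented surface without boundary (each face having finitely many edges), and $M^*=(V^*,E^*,F^* )$ its dual decomposition; faces of $M^*$ correspond bijectively to vertices of $M$. A polyhedral surface is a map $f : V^* \to \mathbb{R}^3$ such that the vertices of each face $\phi \in F^*$ are coplanar (faces may self-intersect). It is trivalent if every vertex of $M^*$ has degree 3. For each face $\phi$, $n_\phi \in \mathbb{S}^2$ is its unit normal (compatible with the orientation) and $h_\phi = \langle f_i, n_\phi\rangle$ for any vertex $i$ of $\phi$ is its height; the vertices of a trivalent surface are determined by $(n,h)$ as intersections of three face planes. For an oriented edge from $i$ to $j$, the left face $l$ is the face whose positively oriented boundary traverses $i \to j$, and the right face $r$ is the other face containing the edge. The edge length is $\ell_{ij} = \|f_j - f_i\|$ and the dihedral angle $\alpha_{ij} \in (-\pi,\pi)$ is defined by $\cos\alpha_{ij} = \langle n_l, n_r\rangle$ and $\sin\alpha_{ij} = \langle n_l \times n_r, (f_j - f_i)/\|f_j-f_i\|\rangle$. The integrated mean curvature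 of a face is $H_\phi = \frac12\sum_{ij\in\partial\phi}\ell_{ij}\tan\frac{\alpha_{ij}}{2}$. The signed area of a face $\phi$ with boundary vertices $i_1,\dots,i_m$ in positive cyclic order is $\mathrm{Area}(f(\phi)) = \frac12\sum_{s=1}^m \langle f_{i_s}\times f_{i_{s+1}}, n_\phi\rangle$ (indices mod $m$). *)

theory Defs
  imports "HOL-Analysis.Analysis"
begin

text \<open>Combinatorial model of the dual decomposition M* of a cellular decomposition
of an oriented surface without boundary, as an oriented combinatorial map on darts
(oriented edges) of type 'e.  For a dart d: src d, tgt d are its initial and final
vertex, lf d is its left face (the face whose positively oriented boundary traverses
src d to tgt d), tw d is the reversed dart (so lf (tw d) is the right face), and
nxt d is the next dart along the positively oriented boundary of lf d.\<close>

definition trivalent_oriented_map ::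
  "('e \<Rightarrow> 'v) \<Rightarrow> ('e \<Rightarrow> 'v) \<Rightarrow> ('e \<Rightarrow> 'f) \<Rightarrow> ('e \<Rightarrow> 'e) \<Rightarrow> ('e \<Rightarrow> 'e) \<Rightarrow> bool" where
  "trivalent_oriented_map src tgt lf tw nxt \<longleftrightarrow>
     (\<forall>d. tw (tw d) = d \<and> tw d \<noteq> d \<and> src (tw d) = tgt d \<and> tgt (tw d) = src d) \<and>
     bij nxt \<and> (\<forall>d. src (nxt d) = tgt d \<and> lf (nxt d) = lf d) \<and>
     surj lf \<and> surj src \<and>
     (\<forall>\<phi>. finite {d. lf d = \<phi>}) \<and>
     (\<forall>d e. lf d = lf e \<longrightarrow> (\<exists>k. (nxt ^^ k) d = e)) \<and>
     (\<forall>d e. src d = src e \<longrightarrow> (\<exists>k. ((nxt \<circ> tw) ^^ k) d = e)) \<and>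
     (\<forall>i. card {d. src d = i} = 3)"

definition vertex_pos ::
  "('e \<Rightarrow> 'v) \<Rightarrow> ('e \<Rightarrow> 'f) \<Rightarrow> ('f \<Rightarrow> real^3) \<Rightarrow> ('f \<Rightarrow> real) \<Rightarrow> 'v \<Rightarrow> real^3" where
  "vertex_pos src lf n h i = (THE x. \<forall>d. src d = i \<longrightarrow> x \<bullet> n (lf d) = h (lf d))"

definition offset_surface ::
  "('e \<Rightarrow> 'v) \<Rightarrow> ('e \<Rightarrow> 'f) \<Rightarrow> ('f \<Rightarrow> real^3) \<Rightarrow> ('f \<Rightarrow> real) \<Rightarrow> real \<Rightarrow> 'v \<Rightarrow> real^3" where
  "offset_surface src lf n h t = vertex_pos src lf n (\<lambda>\<phi>. h \<phi> + t)"

definition edge_length ::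
  "('e \<Rightarrow> 'v) \<Rightarrow> ('e \<Rightarrow> 'v) \<Rightarrow> ('v \<Rightarrow> real^3) \<Rightarrow> 'e \<Rightarrow> real" where
  "edge_length src tgt f d = norm (f (tgt d) - f (src d))"

definition dihedral_angle ::
  "('e \<Rightarrow> 'v) \<Rightarrow> ('e \<Rightarrow> 'v) \<Rightarrow> ('e \<Rightarrow> 'f) \<Rightarrow> ('e \<Rightarrow> 'e) \<Rightarrow> ('v \<Rightarrow> real^3) \<Rightarrow> ('f \<Rightarrow> real^3) \<Rightarrow> 'e \<Rightarrow> real" where
  "dihedral_angle src tgt lf tw f n d =
     (THE \<alpha>. - pi < \<alpha> \<and> \<alpha> < pi \<and>
        cos \<alpha> = n (lf d) \<bullet> n (lf (tw d)) \<and>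
        sin \<alpha> = cross3 (n (lf d)) (n (lf (tw d))) \<bullet>
                  ((1 / norm (f (tgt d) - f (src d))) *\<^sub>R (f (tgt d) - f (src d))))"

definition face_mean_curvature ::
  "('e \<Rightarrow> 'v) \<Rightarrow> ('e \<Rightarrow> 'v) \<Rightarrow> ('e \<Rightarrow> 'f) \<Rightarrow> ('e \<Rightarrow> 'e) \<Rightarrow> ('v \<Rightarrow> real^3) \<Rightarrow> ('f \<Rightarrow> real^3) \<Rightarrow> 'f \<Rightarrow> real" where
  "face_mean_curvature src tgt lf tw f n \<phi> =
     1/2 * (\<Sum>d\<in>{d. lf d = \<phi>}. edge_length src tgt f d * tan (dihedral_angle src tgt lf tw f n d / 2))"

definition face_area ::
  "('e \<Rightarrow> 'v) \<Rightarrow> ('e \<Rightarrow> 'v) \<Rightarrow> ('e \<Rightarrow> 'f) \<Rightarrow> ('v \<Rightarrow> real^3) \<Rightarrow> ('f \<Rightarrow> real^3) \<Rightarrow> 'f \<Rightarrow> real" where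
  "face_area src tgt lf f n \<phi> =
     1/2 * (\<Sum>d\<in>{d. lf d = \<phi>}. cross3 (f (src d)) (f (tgt d)) \<bullet> n \<phi>)"

end

theory Submission
  imports Defs
begin

(* Offsetting every face plane by t moves each vertex i along a straight line, f_i + t w_i, where
   w_i is the vector with <w_i, n_phi> = 1 for the three faces phi at i.  Hence the area of a face
   is a quadratic polynomial in t, with linear coefficient (1/2) sum <w_i x f_j + f_i x w_j, n>
   over its edges i -> j.  Up to a sum that telescopes around the face this coefficient equals
   (1/2) sum <(w_i + w_j) x (f_j - f_i), n>, and each of <w_i x e, n_l> and <w_j x e, n_l> equals
   l tan(alpha/2): the edge e is parallel to n_l x n_r, while w_i and w_j lie on the line
   <w, n_l> = <w, n_r> = 1. *)

unbundle cross3_syntax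

lemma span_eq_UNIV_if_independent_card_DIM:
  fixes N :: "'a::euclidean_space set"
  assumes "independent N" "card N = DIM('a)"
  shows "span N = UNIV"
  using assms dim_eq_card[of N N] dim_eq_full[of N] by simp

lemma ex_inner_eq_1_if_independent:
  fixes N :: "'a::euclidean_space set"
  assumes "independent N"
  shows "\<exists>w. \<forall>v\<in>N. w \<bullet> v = 1"
proof -
  obtain g :: "'a \<Rightarrow> real" where g: "linear g" "\<And>v. v \<in> N \<Longrightarrow> g v = 1"
    using linear_independent_extend[OF assms, of "\<lambda>_. 1"] by auto
  have "adjoint g 1 \<bullet> v = 1" if "v \<in> N" for v
    using adjoint_works[OF g(1), of v 1] g(2)[OF that] by (simp add: inner_commute)
  then show ?thesis by blast
qed

lemma unit_inner_eq_1_iff: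
  fixes u v :: "'a::real_inner"
  assumes "norm u = 1" "norm v = 1"
  shows "u \<bullet> v = 1 \<longleftrightarrow> u = v"
  using norm_cauchy_schwarz_eq[of u v] assms by auto

lemma unit_inner_eq_minus_1_iff:
  fixes u v :: "'a::real_inner"
  assumes "norm u = 1" "norm v = 1"
  shows "u \<bullet> v = -1 \<longleftrightarrow> u = - v"
  using unit_inner_eq_1_iff[of u "- v"] assms by auto

lemma ex1_angle_cos_sin:
  fixes c s :: real
  assumes "c\<^sup>2 + s\<^sup>2 = 1" "c \<noteq> -1"
  shows "\<exists>!\<alpha>. - pi < \<alpha> \<and> \<alpha> < pi \<and> cos \<alpha> = c \<and> sin \<alpha> = s"
proof (rule ex_ex1I)
  obtain t where t: "0 \<le> t" "t < 2*pi" "c = cos t" "s = sin t"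
    using sincos_total_2pi[OF assms(1)] by blast
  have "t \<noteq> pi" using t assms(2) by auto
  show "\<exists>\<alpha>. - pi < \<alpha> \<and> \<alpha> < pi \<and> cos \<alpha> = c \<and> sin \<alpha> = s"
  proof (cases "t < pi")
    case True then show ?thesis using t by (intro exI[of _ t]) auto
  next
    case False
    then show ?thesis using t \<open>t \<noteq> pi\<close>
      by (intro exI[of _ "t - 2*pi"]) (auto simp: sin_diff cos_diff)
  qed
next
  fix a b assume a: "- pi < a \<and> a < pi \<and> cos a = c \<and> sin a = s"
    and b: "- pi < b \<and> b < pi \<and> cos b = c \<and> sin b = s"
  then obtain m :: int where m: "a = b + 2 * pi * m" using sin_cos_eq_iff by metis
  have "\<bar>2 * pi * m\<bar> < 2 * pi" using a b m by auto
  then have "m = 0" by (simp add: abs_mult)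
  then show "a = b" using m by simp
qed

lemma tan_half_the_angle:
  fixes c s :: real
  assumes "c\<^sup>2 + s\<^sup>2 = 1" "c \<noteq> -1"
  shows "tan ((THE \<alpha>. - pi < \<alpha> \<and> \<alpha> < pi \<and> cos \<alpha> = c \<and> sin \<alpha> = s) / 2) = s / (1 + c)"
proof -
  define \<alpha> where "\<alpha> = (THE \<alpha>. - pi < \<alpha> \<and> \<alpha> < pi \<and> cos \<alpha> = c \<and> sin \<alpha> = s)"
  have "cos \<alpha> = c" "sin \<alpha> = s"
    using theI'[OF ex1_angle_cos_sin[OF assms]] by (simp_all add: \<alpha>_def)
  then show ?thesis
    using tan_half[of "\<alpha> / 2"] by (simp add: \<alpha>_def[symmetric] add.commute)
qed

lemma scaleR_cross3_eq_if_orthogonal: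
  assumes "e \<bullet> a = 0" "e \<bullet> b = 0"
  shows "((a \<times> b) \<bullet> (a \<times> b)) *\<^sub>R e = ((a \<times> b) \<bullet> e) *\<^sub>R (a \<times> b)"
proof -
  have "e \<times> (a \<times> b) = 0" using Lagrange[of e a b] assms by simp
  then show ?thesis using Lagrange[of "a \<times> b" e "a \<times> b"] by (simp add: cross_skew[of e] inner_commute)
qed

lemma inner_cross3_power2_if_orthogonal:
  assumes "e \<bullet> a = 0" "e \<bullet> b = 0"
  shows "((a \<times> b) \<bullet> e)\<^sup>2 = ((a \<times> b) \<bullet> (a \<times> b)) * (e \<bullet> e)"
  using arg_cong[OF scaleR_cross3_eq_if_orthogonal[OF assms], of "\<lambda>x. x \<bullet> e"]
  by (simp add: power2_eq_square inner_commute)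

lemma inner_cross3_dual_eq:
  fixes nl nr e w :: "real^3"
  assumes nl: "norm nl = 1" and nr: "norm nr = 1" and "nl \<noteq> nr"
    and e: "e \<bullet> nl = 0" "e \<bullet> nr = 0" and w: "w \<bullet> nl = 1" "w \<bullet> nr = 1"
  shows "(1 + nl \<bullet> nr) * ((w \<times> e) \<bullet> nl) = (nl \<times> nr) \<bullet> e"
proof -
  define c where "c = nl \<bullet> nr"
  define k where "k = nl \<times> nr"
  have "c \<noteq> 1" using unit_inner_eq_1_iff[OF nl nr] \<open>nl \<noteq> nr\<close> by (simp add: c_def)
  have "k \<bullet> k = (norm k)\<^sup>2" by (simp add: power2_norm_eq_inner)
  also have "\<dots> = 1 - c\<^sup>2" using norm_cross[of nl nr] nl nr by (simp add: k_def c_def)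
  finally have kk: "k \<bullet> k = (1 - c) * (1 + c)" by (simp add: power2_eq_square algebra_simps)
  have "k \<times> nl = nr - c *\<^sub>R nl"
    using Lagrange[of nl nl nr] nl cross_skew[of k nl] by (simp add: k_def c_def dot_square_norm)
  then have wk: "(w \<times> k) \<bullet> nl = 1 - c"
    using cross_triple[of w k nl] w by (simp add: inner_diff_right inner_commute)
  have "(k \<bullet> k) * ((w \<times> e) \<bullet> nl) = (w \<times> ((k \<bullet> k) *\<^sub>R e)) \<bullet> nl"
    by (simp add: cross_mult_right)
  also have "\<dots> = (k \<bullet> e) * (1 - c)"
    using scaleR_cross3_eq_if_orthogonal[OF e] wk by (simp add: k_def cross_mult_right)
  finally have "(1 - c) * ((1 + c) * ((w \<times> e) \<bullet> nl)) = (1 - c) * (k \<bullet> e)"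
    by (simp add: kk algebra_simps)
  then show ?thesis using \<open>c \<noteq> 1\<close> by (simp add: c_def k_def)
qed

lemma norm_mult_tan_half_angle_eq_inner_cross3:
  fixes nl nr e w :: "real^3"
  assumes nl: "norm nl = 1" and nr: "norm nr = 1" and "nl \<noteq> nr" "nl \<noteq> - nr" "e \<noteq> 0"
    and e: "e \<bullet> nl = 0" "e \<bullet> nr = 0" and w: "w \<bullet> nl = 1" "w \<bullet> nr = 1"
  shows "norm e * tan ((THE \<alpha>. - pi < \<alpha> \<and> \<alpha> < pi \<and> cos \<alpha> = nl \<bullet> nr \<and>
            sin \<alpha> = (nl \<times> nr) \<bullet> ((1 / norm e) *\<^sub>R e)) / 2) = (w \<times> e) \<bullet> nl"
proof -
  define c where "c = nl \<bullet> nr"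
  define s where "s = (nl \<times> nr) \<bullet> ((1 / norm e) *\<^sub>R e)"
  have "c \<noteq> -1" using unit_inner_eq_minus_1_iff[OF nl nr] \<open>nl \<noteq> - nr\<close> by (simp add: c_def)
  have "s\<^sup>2 = (norm (nl \<times> nr))\<^sup>2"
    using inner_cross3_power2_if_orthogonal[OF e] \<open>e \<noteq> 0\<close>
    by (simp add: s_def power_divide power2_norm_eq_inner)
  then have "c\<^sup>2 + s\<^sup>2 = 1" using norm_cross[of nl nr] nl nr by (simp add: c_def)
  then have "norm e * tan ((THE \<alpha>. - pi < \<alpha> \<and> \<alpha> < pi \<and> cos \<alpha> = c \<and> sin \<alpha> = s) / 2)
      = ((nl \<times> nr) \<bullet> e) / (1 + c)"
    using tan_half_the_angle \<open>c \<noteq> -1\<close> \<open>e \<noteq> 0\<close> by (simp add: s_def)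
  also have "\<dots> = (w \<times> e) \<bullet> nl"
    using inner_cross3_dual_eq[OF nl nr \<open>nl \<noteq> nr\<close> e w] \<open>c \<noteq> -1\<close>
    by (simp add: c_def field_simps)
  finally show ?thesis by (simp add: c_def s_def)
qed

lemma trivalent_oriented_map_incident_faces:
  assumes comb: "trivalent_oriented_map src tgt lf tw nxt" and P: "\<And>d. P (src d) (lf d)"
  shows "P (tgt d) (lf d)" "P (src d) (lf (tw d))" "P (tgt d) (lf (tw d))"
proof -
  have "\<forall>d. src (tw d) = tgt d \<and> tgt (tw d) = src d" "\<forall>d. src (nxt d) = tgt d \<and> lf (nxt d) = lf d"
    using comb unfolding trivalent_oriented_map_def by blast+
  then show "P (tgt d) (lf d)" "P (src d) (lf (tw d))" "P (tgt d) (lf (tw d))"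
    using P[of "nxt d"] P[of "nxt (tw d)"] P[of "tw d"] by simp_all
qed

lemma vertex_pos_eqI:
  fixes n :: "'f \<Rightarrow> real^3"
  assumes indep: "independent (n ` lf ` {d. src d = i})" "card (n ` lf ` {d. src d = i}) = 3"
    and x: "\<And>d. src d = i \<Longrightarrow> x \<bullet> n (lf d) = h (lf d)"
  shows "vertex_pos src lf n h i = x"
  unfolding vertex_pos_def
proof (rule the_equality)
  show "\<forall>d. src d = i \<longrightarrow> x \<bullet> n (lf d) = h (lf d)" using x by blast
next
  fix y assume y: "\<forall>d. src d = i \<longrightarrow> y \<bullet> n (lf d) = h (lf d)"
  have "span (n ` lf ` {d. src d = i}) = UNIV"
    using span_eq_UNIV_if_independent_card_DIM[OF indep(1)] indep(2) by simp
  moreover have "v \<bullet> y = v \<bullet> x" if "v \<in> n ` lf ` {d. src d = i}" for v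
    using that x y by (auto simp: inner_commute)
  ultimately show "y = x" by (intro vector_eq_dot_span[of y _ x]) auto
qed

lemma offset_surface_eq_translate:
  fixes n :: "'f \<Rightarrow> real^3"
  assumes indep: "\<forall>i. card (n ` lf ` {d. src d = i}) = 3 \<and> independent (n ` lf ` {d. src d = i})"
    and planar: "\<forall>d. f (src d) \<bullet> n (lf d) = h (lf d)"
    and dual: "\<And>d. w (src d) \<bullet> n (lf d) = 1"
  shows "offset_surface src lf n h t = (\<lambda>i. f i + t *\<^sub>R w i)"
proof
  fix i
  show "offset_surface src lf n h t i = f i + t *\<^sub>R w i"
    unfolding offset_surface_def
    using indep planar dual by (intro vertex_pos_eqI) (auto simp: inner_add_left)
qed

lemma has_real_derivative_face_area_translate:
  "((\<lambda>t. face_area src tgt lf (\<lambda>i. f i + t *\<^sub>R w i) n \<phi>) has_real_derivative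
     1/2 * (\<Sum>d | lf d = \<phi>. (w (src d) \<times> f (tgt d) + f (src d) \<times> w (tgt d)) \<bullet> n \<phi>)) (at 0)"
proof -
  define S where "S = {d. lf d = \<phi>}"
  define a0 where "a0 d = (f (src d) \<times> f (tgt d)) \<bullet> n \<phi>" for d
  define a1 where "a1 d = (w (src d) \<times> f (tgt d) + f (src d) \<times> w (tgt d)) \<bullet> n \<phi>" for d
  define a2 where "a2 d = (w (src d) \<times> w (tgt d)) \<bullet> n \<phi>" for d
  have "((f (src d) + t *\<^sub>R w (src d)) \<times> (f (tgt d) + t *\<^sub>R w (tgt d))) \<bullet> n \<phi>
      = a0 d + t * a1 d + t\<^sup>2 * a2 d" for d t
    by (simp add: a0_def a1_def a2_def cross_add_left cross_add_right cross_mult_left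
        cross_mult_right power2_eq_square algebra_simps)
  then have area: "face_area src tgt lf (\<lambda>i. f i + t *\<^sub>R w i) n \<phi>
      = 1/2 * (sum a0 S + t * sum a1 S + t\<^sup>2 * sum a2 S)" for t
    unfolding face_area_def S_def[symmetric] by (simp add: sum.distrib sum_distrib_left)
  have "((\<lambda>t. 1/2 * (sum a0 S + t * sum a1 S + t\<^sup>2 * sum a2 S)) has_real_derivative
      1/2 * sum a1 S) (at 0)"
    by (auto intro!: derivative_eq_intros)
  then show ?thesis unfolding area by (simp add: a1_def S_def)
qed

lemma sum_tgt_eq_sum_src:
  assumes "finite S" "inj nxt" "\<And>d. d \<in> S \<Longrightarrow> nxt d \<in> S" "\<And>d. src (nxt d) = tgt d"
  shows "(\<Sum>d\<in>S. G (tgt d)) = (\<Sum>d\<in>S. G (src d))"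
proof -
  have "nxt ` S = S"
    using endo_inj_surj[OF assms(1)] assms(2,3) by (auto intro: inj_on_subset)
  then have "(\<Sum>d\<in>S. G (src d)) = (\<Sum>d\<in>S. G (src (nxt d)))"
    using sum.reindex[of nxt S "\<lambda>d. G (src d)"] inj_on_subset[OF assms(2)] by simp
  then show ?thesis using assms(4) by simp
qed

lemma sum_cross3_translate_eq_sum_edges:
  assumes "finite S" "inj nxt" "\<And>d. d \<in> S \<Longrightarrow> nxt d \<in> S" "\<And>d. src (nxt d) = tgt d"
  shows "(\<Sum>d\<in>S. (w (src d) \<times> f (tgt d) + f (src d) \<times> w (tgt d)) \<bullet> v)
       = (\<Sum>d\<in>S. (w (src d) \<times> (f (tgt d) - f (src d))) \<bullet> v)
       + (\<Sum>d\<in>S. (w (tgt d) \<times> (f (tgt d) - f (src d))) \<bullet> v)"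
proof -
  let ?A = "\<lambda>d. (w (src d) \<times> (f (tgt d) - f (src d))) \<bullet> v"
  let ?B = "\<lambda>d. (w (tgt d) \<times> (f (tgt d) - f (src d))) \<bullet> v"
  let ?C = "\<lambda>d. (w (src d) \<times> f (tgt d) + f (src d) \<times> w (tgt d)) \<bullet> v"
  let ?G = "\<lambda>i. (w i \<times> f i) \<bullet> v"
  have "?A d + ?B d = ?C d + (?G (tgt d) - ?G (src d))" for d
    using cross_skew[of "f (src d)" "w (tgt d)"]
    by (simp add: Cross3.right_diff_distrib inner_diff_left)
  then have "sum ?A S + sum ?B S = sum ?C S + (sum (\<lambda>d. ?G (tgt d)) S - sum (\<lambda>d. ?G (src d)) S)"
    by (simp only: sum.distrib[symmetric] sum_subtractf[symmetric])
  also have "\<dots> = sum ?C S"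
    using sum_tgt_eq_sum_src[where src = src and tgt = tgt, OF assms] by simp
  finally show ?thesis by simp
qed

lemma edge_length_mult_tan_half_dihedral_angle:
  fixes n :: "'f \<Rightarrow> real^3"
  assumes comb: "trivalent_oriented_map src tgt lf tw nxt"
    and unit: "\<forall>\<phi>. norm (n \<phi>) = 1"
    and planar: "\<forall>d. f (src d) \<bullet> n (lf d) = h (lf d)"
    and nonzero_edges: "\<forall>d. f (src d) \<noteq> f (tgt d)"
    and adj: "\<forall>d. n (lf d) \<noteq> n (lf (tw d)) \<and> n (lf d) \<noteq> - n (lf (tw d))"
    and dual: "\<And>d. w (src d) \<bullet> n (lf d) = 1"
  shows "edge_length src tgt f d * tan (dihedral_angle src tgt lf tw f n d / 2)
           = (w (src d) \<times> (f (tgt d) - f (src d))) \<bullet> n (lf d)"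
    and "edge_length src tgt f d * tan (dihedral_angle src tgt lf tw f n d / 2)
           = (w (tgt d) \<times> (f (tgt d) - f (src d))) \<bullet> n (lf d)"
proof -
  define e where "e = f (tgt d) - f (src d)"
  have planar_at: "f (tgt d) \<bullet> n (lf d) = h (lf d)" "f (src d) \<bullet> n (lf (tw d)) = h (lf (tw d))"
    "f (tgt d) \<bullet> n (lf (tw d)) = h (lf (tw d))"
    using trivalent_oriented_map_incident_faces[where P = "\<lambda>i \<phi>. f i \<bullet> n \<phi> = h \<phi>", OF comb] planar
    by simp_all
  have dual_at: "w (tgt d) \<bullet> n (lf d) = 1" "w (src d) \<bullet> n (lf (tw d)) = 1" "w (tgt d) \<bullet> n (lf (tw d)) = 1"
    using trivalent_oriented_map_incident_faces[where P = "\<lambda>i \<phi>. w i \<bullet> n \<phi> = 1", OF comb] dual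
    by simp_all
  have e: "e \<bullet> n (lf d) = 0" "e \<bullet> n (lf (tw d)) = 0"
    using planar planar_at by (simp_all add: e_def inner_diff_left)
  have "e \<noteq> 0" using nonzero_edges[rule_format, of d] by (auto simp: e_def)
  note tan = norm_mult_tan_half_angle_eq_inner_cross3[OF unit[rule_format] unit[rule_format]
      adj[rule_format, THEN conjunct1] adj[rule_format, THEN conjunct2] \<open>e \<noteq> 0\<close> e]
  show "edge_length src tgt f d * tan (dihedral_angle src tgt lf tw f n d / 2)
           = (w (src d) \<times> (f (tgt d) - f (src d))) \<bullet> n (lf d)"
    using tan[OF dual dual_at(2)] by (simp add: edge_length_def dihedral_angle_def e_def)
  show "edge_length src tgt f d * tan (dihedral_angle src tgt lf tw f n d / 2)
           = (w (tgt d) \<times> (f (tgt d) - f (src d))) \<bullet> n (lf d)"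
    using tan[OF dual_at(1,3)] by (simp add: edge_length_def dihedral_angle_def e_def)
qed

lemma face_mean_curvature_eq_sum_cross3_translate:
  fixes n :: "'f \<Rightarrow> real^3"
  assumes comb: "trivalent_oriented_map src tgt lf tw nxt"
    and unit: "\<forall>\<phi>. norm (n \<phi>) = 1"
    and planar: "\<forall>d. f (src d) \<bullet> n (lf d) = h (lf d)"
    and nonzero_edges: "\<forall>d. f (src d) \<noteq> f (tgt d)"
    and adj: "\<forall>d. n (lf d) \<noteq> n (lf (tw d)) \<and> n (lf d) \<noteq> - n (lf (tw d))"
    and dual: "\<And>d. w (src d) \<bullet> n (lf d) = 1"
  shows "face_mean_curvature src tgt lf tw f n \<phi>
     = 1/4 * (\<Sum>d | lf d = \<phi>. (w (src d) \<times> f (tgt d) + f (src d) \<times> w (tgt d)) \<bullet> n \<phi>)"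
proof -
  define S where "S = {d. lf d = \<phi>}"
  define L where "L d = edge_length src tgt f d * tan (dihedral_angle src tgt lf tw f n d / 2)" for d
  note edge = edge_length_mult_tan_half_dihedral_angle[OF comb unit planar nonzero_edges adj dual]
  have "finite S" "inj nxt" "\<And>d. d \<in> S \<Longrightarrow> nxt d \<in> S" "\<And>d. src (nxt d) = tgt d"
    using comb unfolding trivalent_oriented_map_def S_def by (auto simp: bij_is_inj)
  then have "(\<Sum>d\<in>S. (w (src d) \<times> f (tgt d) + f (src d) \<times> w (tgt d)) \<bullet> n \<phi>)
      = (\<Sum>d\<in>S. (w (src d) \<times> (f (tgt d) - f (src d))) \<bullet> n \<phi>)
      + (\<Sum>d\<in>S. (w (tgt d) \<times> (f (tgt d) - f (src d))) \<bullet> n \<phi>)"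
    by (rule sum_cross3_translate_eq_sum_edges[where src = src and tgt = tgt])
  also have "\<dots> = 2 * sum L S"
  proof -
    have "L d = (w (src d) \<times> (f (tgt d) - f (src d))) \<bullet> n \<phi>"
      and "L d = (w (tgt d) \<times> (f (tgt d) - f (src d))) \<bullet> n \<phi>" if "d \<in> S" for d
      using edge[of d] that by (simp_all add: L_def S_def)
    then show ?thesis by (simp cong: sum.cong)
  qed
  finally show ?thesis
    unfolding face_mean_curvature_def L_def S_def by simp
qed

theorem mainTheorem2:
  fixes src tgt :: "'e \<Rightarrow> 'v" and lf :: "'e \<Rightarrow> 'f" and tw nxt :: "'e \<Rightarrow> 'e"
    and f :: "'v \<Rightarrow> real^3" and n :: "'f \<Rightarrow> real^3" and h :: "'f \<Rightarrow> real"
  assumes comb: "trivalent_oriented_map src tgt lf tw nxt"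
    and unit: "\<forall>\<phi>. norm (n \<phi>) = 1"
    and planar: "\<forall>d. f (src d) \<bullet> n (lf d) = h (lf d)"
    and nonzero_edges: "\<forall>d. f (src d) \<noteq> f (tgt d)"
    and indep: "\<forall>i. card (n ` lf ` {d. src d = i}) = 3 \<and> independent (n ` lf ` {d. src d = i})"
    and adj: "\<forall>d. n (lf d) \<noteq> n (lf (tw d)) \<and> n (lf d) \<noteq> - n (lf (tw d))"
  shows "\<exists>D. ((\<lambda>t. face_area src tgt lf (offset_surface src lf n h t) n \<phi>) has_real_derivative D) (at 0)
            \<and> face_mean_curvature src tgt lf tw f n \<phi> = 1/2 * D"
proof -
  have "\<forall>i. \<exists>u. \<forall>v\<in>n ` lf ` {d. src d = i}. u \<bullet> v = 1"
    using indep ex_inner_eq_1_if_independent by blast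
  then obtain w where "\<forall>i. \<forall>v\<in>n ` lf ` {d. src d = i}. w i \<bullet> v = 1"
    by metis
  then have dual: "\<And>d. w (src d) \<bullet> n (lf d) = 1" by blast
  let ?D = "1/2 * (\<Sum>d | lf d = \<phi>. (w (src d) \<times> f (tgt d) + f (src d) \<times> w (tgt d)) \<bullet> n \<phi>)"
  show ?thesis
  proof (intro exI[of _ ?D] conjI)
    show "((\<lambda>t. face_area src tgt lf (offset_surface src lf n h t) n \<phi>) has_real_derivative ?D) (at 0)"
      unfolding offset_surface_eq_translate[OF indep planar dual]
      by (rule has_real_derivative_face_area_translate)
    show "face_mean_curvature src tgt lf tw f n \<phi> = 1/2 * ?D"
      using face_mean_curvature_eq_sum_cross3_translate[OF comb unit planar nonzero_edges adj dual]
      by simp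
  qed
qed

end
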